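(* Let $\mathfrak g$ and the infinite quiver $Q(\mathfrak g)$ be as in the context. Let $\mathbb C(\tau)$ be the field of rational functions in variables $\tau_i(n)$ ($i\in S$, $n\in d\mathbb Z$), and put $T_i(n)=\prod_{j<i}\prod_{k=1}^{-C_{ij}}\tau_j(n+kd_{ij})\cdot\prod_{j>i}\prod_{k=0}^{-C_{ij}-1}\tau_j(n+kd_{ij})$ with $d_{ij}=\min(d_i,d_j)$, $s_i(n)=\dfrac{T_i(n)}{\tau_i(n)\tau_i(n+d_i)}$. Let $p_\tau:\mathbb C(\mathbf X)\to\mathbb C(\tau)$ be the field homomorphism $X^i_n\mapsto s_i(n)/s_i(n+d_i)$, let $\phi:\mathbb C(\tau)\to\mathbb C(\mathbf A)$ be the field homomorphism $\tau_i(n)\mapsto A^i_{n-d_i}$, and let $p^\ast:\mathbb C(\mathbf X)\to\mathbb C(\mathbf A)$ be $p^\ast(X^i_n)=\prod_{v^j_k}(A^j_k)^{\varepsilon_{v^i_n,v^j_k}}$ (product over the vertices of $Q(\mathfrak g)$). Then $\phi\circ p_\tau=p^\ast$.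
   Context: Let $\mathfrak g$ be a finite-dimensional complex simple Lie algebra of rank $\ell$, $S=\{1,\dots,\ell\}$, of type $A_\ell$, $B_\ell$, $C_\ell$, $D_\ell$ ($\ell\ge4$), $E_{6,7,8}$, $F_4$ or $G_2$, labelled: $A_\ell,B_\ell,C_\ell$ chain $1-\cdots-\ell$ ($\alpha_\ell$ short in $B_\ell$, long in $C_\ell$); $D_\ell$: chain $1-\cdots-(\ell-1)$ plus edge $(\ell-2)-\ell$; $E_\ell$: chain $1-2-3-5-\cdots-\ell$ plus edge $3-4$; $F_4$: chain $1-2-3-4$, $\alpha_1,\alpha_2$ long; $G_2$: $\alpha_2$ long. $d_i=(\alpha_i,\alpha_i)/2$: $1$ in types $A,D,E$; $(1,\dots,1,\frac12)$ for $B_\ell$; $(1,\dots,1,2)$ for $C_\ell$; $(1,1,\frac12,\frac12)$ for $F_4$; $(1,3)$ for $G_2$; $d=\min d_i$; $C_{ij}=2(\alpha_i,\alpha_j)/(\alpha_i,\alpha_i)$. Quiver $Q(\mathfrak g)$ on $\{v^i_n: i\in S, n\in d\mathbb Z\}$, arrows for all $n$: (simply-laced) orient Dynkin edges from larger to smaller label ($C(\mathfrak g)$); $v^i_n\to v^i_{n+1}$, and for each $i\to j$ in $C(\mathfrak g)$, $v^i_n\to v^j_n$ and $v^j_{n+1}\to v^i_n$. ($B_\ell$) $v^i_n\to v^i_{n+1}$ ($i\le\ell-1$); $v^i_n\to v^{i-1}_n$, $v^{i-1}_{n+1}\to v^i_n$ ($2\le i\le\ell-1$); $v^\ell_n\to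 v^\ell_{n+1/2}$, $v^\ell_n\to v^{\ell-1}_{n-1/2}$, $v^{\ell-1}_{n+1/2}\to v^\ell_n$. ($C_\ell$) $v^i_n\to v^i_{n+1}$ ($i\le\ell-1$); $v^i_n\to v^{i-1}_n$, $v^{i-1}_{n+1}\to v^i_n$ ($2\le i\le\ell-1$); $v^\ell_n\to v^\ell_{n+2}$, $v^\ell_n\to v^{\ell-1}_n$, $v^{\ell-1}_{n+2}\to v^\ell_n$. ($F_4$) $v^i_n\to v^i_{n+1}$ ($i=1,2$); $v^2_n\to v^1_n$, $v^1_{n+1}\to v^2_n$; $v^3_n\to v^3_{n+1/2}$, $v^3_n\to v^2_{n-1/2}$, $v^2_{n+1/2}\to v^3_n$; $v^4_n\to v^4_{n+1/2}$, $v^4_n\to v^3_n$, $v^3_{n+1/2}\to v^4_n$. ($G_2$) $v^1_n\to v^1_{n+1}$, $v^2_n\to v^2_{n+3}$, $v^2_n\to v^1_n$, $v^1_{n+3}\to v^2_n$. Exchange matrix $\varepsilon_{uv}=\#\{u\to v\}-\#\{v\to u\}$. $\mathbb C(\mathbf X)$ and $\mathbb C(\mathbf A)$ are the fields of rational functions in the $X$-variables $X^i_n$ and $A$-variables $A^i_n$ attached to the vertices $v^i_n$. (The $\tau_i(n)$ are the $\tau$-functions of the lattice $\mathfrak g$-Toda field equation, i.e. solutions of $D_t\tau_i(n)\cdot\tau_i(n+d_i)=T_i(n)$, but the statement is an identity of field homomorphisms.) *)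

theory Defs
  imports Complex_Main
begin

datatype lie_type = TA nat | TB nat | TC nat | TD nat | TE nat | TF4 | TG2

fun rank :: "lie_type \<Rightarrow> nat" where
  "rank (TA l) = l" | "rank (TB l) = l" | "rank (TC l) = l" | "rank (TD l) = l"
| "rank (TE l) = l" | "rank TF4 = 4" | "rank TG2 = 2"

fun valid_type :: "lie_type \<Rightarrow> bool" where
  "valid_type (TA l) = (l \<ge> 1)"
| "valid_type (TB l) = (l \<ge> 2)"
| "valid_type (TC l) = (l \<ge> 2)"
| "valid_type (TD l) = (l \<ge> 4)"
| "valid_type (TE l) = (l \<in> {6,7,8})"
| "valid_type TF4 = True"
| "valid_type TG2 = True"

definition Sset :: "lie_type \<Rightarrow> nat set" where
  "Sset g = {1..rank g}"

text \<open>Unordered Dynkin edges with the labelling of the paper.\<close>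
fun dynkin_adj :: "lie_type \<Rightarrow> nat \<Rightarrow> nat \<Rightarrow> bool" where
  "dynkin_adj (TD l) a b =
     (let x = min a b; y = max a b in (y = x + 1 \<and> y \<le> l - 1) \<or> (x = l - 2 \<and> y = l))"
| "dynkin_adj (TE l) a b =
     (let x = min a b; y = max a b in
        (x, y) \<in> {(1,2),(2,3),(3,5),(3,4)} \<or> (x \<ge> 5 \<and> y = x + 1 \<and> y \<le> l))"
| "dynkin_adj g a b =
     (let x = min a b; y = max a b in y = x + 1 \<and> 1 \<le> x \<and> y \<le> rank g)"

text \<open>\<open>d_i = (\<alpha>_i,\<alpha>_i)/2\<close>.\<close>
fun dd :: "lie_type \<Rightarrow> nat \<Rightarrow> rat" where
  "dd (TB l) i = (if i = l then 1/2 else 1)"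
| "dd (TC l) i = (if i = l then 2 else 1)"
| "dd TF4 i = (if i \<le> 2 then 1 else 1/2)"
| "dd TG2 i = (if i = 1 then 1 else 3)"
| "dd g i = 1"

definition dmin :: "lie_type \<Rightarrow> rat" where
  "dmin g = Min (dd g ` Sset g)"

definition dZ :: "lie_type \<Rightarrow> rat set" where
  "dZ g = {of_int m * dmin g | m. True}"

definition root_ip :: "lie_type \<Rightarrow> nat \<Rightarrow> nat \<Rightarrow> rat" where
  "root_ip g i j =
     (if i = j then 2 * dd g i
      else if dynkin_adj g i j then - max (dd g i) (dd g j) else 0)"

definition cartan :: "lie_type \<Rightarrow> nat \<Rightarrow> nat \<Rightarrow> rat" where
  "cartan g i j = 2 * root_ip g i j / root_ip g i i"

definition dij :: "lie_type \<Rightarrow> nat \<Rightarrow> nat \<Rightarrow> rat" where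
  "dij g i j = min (dd g i) (dd g j)"

text \<open>Number of arrows \<open>v^a_p \<rightarrow> v^b_q\<close> in the quiver \<open>Q(g)\<close> (before restricting to vertices);
  each summand is one family of arrows listed in the paper.\<close>
fun arrows_raw :: "lie_type \<Rightarrow> nat \<Rightarrow> rat \<Rightarrow> nat \<Rightarrow> rat \<Rightarrow> nat" where
  "arrows_raw (TB l) a p b q =
     of_bool (a \<le> l - 1 \<and> b = a \<and> q = p + 1)
   + of_bool (2 \<le> a \<and> a \<le> l - 1 \<and> b = a - 1 \<and> q = p)
   + of_bool (2 \<le> b \<and> b \<le> l - 1 \<and> a = b - 1 \<and> p = q + 1)
   + of_bool (a = l \<and> b = l \<and> q = p + 1/2)
   + of_bool (a = l \<and> b = l - 1 \<and> q = p - 1/2)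
   + of_bool (a = l - 1 \<and> b = l \<and> p = q + 1/2)"
| "arrows_raw (TC l) a p b q =
     of_bool (a \<le> l - 1 \<and> b = a \<and> q = p + 1)
   + of_bool (2 \<le> a \<and> a \<le> l - 1 \<and> b = a - 1 \<and> q = p)
   + of_bool (2 \<le> b \<and> b \<le> l - 1 \<and> a = b - 1 \<and> p = q + 1)
   + of_bool (a = l \<and> b = l \<and> q = p + 2)
   + of_bool (a = l \<and> b = l - 1 \<and> q = p)
   + of_bool (a = l - 1 \<and> b = l \<and> p = q + 2)"
| "arrows_raw TF4 a p b q =
     of_bool (a \<in> {1,2} \<and> b = a \<and> q = p + 1)
   + of_bool (a = 2 \<and> b = 1 \<and> q = p)
   + of_bool (a = 1 \<and> b = 2 \<and> p = q + 1)
   + of_bool (a = 3 \<and> b = 3 \<and> q = p + 1/2)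
   + of_bool (a = 3 \<and> b = 2 \<and> q = p - 1/2)
   + of_bool (a = 2 \<and> b = 3 \<and> p = q + 1/2)
   + of_bool (a = 4 \<and> b = 4 \<and> q = p + 1/2)
   + of_bool (a = 4 \<and> b = 3 \<and> q = p)
   + of_bool (a = 3 \<and> b = 4 \<and> p = q + 1/2)"
| "arrows_raw TG2 a p b q =
     of_bool (a = 1 \<and> b = 1 \<and> q = p + 1)
   + of_bool (a = 2 \<and> b = 2 \<and> q = p + 3)
   + of_bool (a = 2 \<and> b = 1 \<and> q = p)
   + of_bool (a = 1 \<and> b = 2 \<and> p = q + 3)"
| "arrows_raw g a p b q =
     \<comment> \<open>simply-laced: Dynkin edges oriented from larger to smaller label\<close>
     of_bool (b = a \<and> q = p + 1)
   + of_bool (dynkin_adj g a b \<and> a > b \<and> q = p)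
   + of_bool (dynkin_adj g a b \<and> b > a \<and> p = q + 1)"

definition vertices :: "lie_type \<Rightarrow> (nat \<times> rat) set" where
  "vertices g = {(i, n). i \<in> Sset g \<and> n \<in> dZ g}"

definition arrows :: "lie_type \<Rightarrow> nat \<times> rat \<Rightarrow> nat \<times> rat \<Rightarrow> nat" where
  "arrows g u v =
     (if u \<in> vertices g \<and> v \<in> vertices g
      then arrows_raw g (fst u) (snd u) (fst v) (snd v) else 0)"

definition eps :: "lie_type \<Rightarrow> nat \<times> rat \<Rightarrow> nat \<times> rat \<Rightarrow> int" where
  "eps g u v = int (arrows g u v) - int (arrows g v u)"

definition Tfun :: "lie_type \<Rightarrow> (nat \<Rightarrow> rat \<Rightarrow> 'a::field) \<Rightarrow> nat \<Rightarrow> rat \<Rightarrow> 'a" where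
  "Tfun g \<tau> i n =
     (\<Prod>j\<in>{j\<in>Sset g. j < i}. \<Prod>k\<in>{k::nat. 1 \<le> k \<and> of_nat k \<le> - cartan g i j}.
         \<tau> j (n + of_nat k * dij g i j))
   * (\<Prod>j\<in>{j\<in>Sset g. j > i}. \<Prod>k\<in>{k::nat. of_nat k \<le> - cartan g i j - 1}.
         \<tau> j (n + of_nat k * dij g i j))"

definition sfun :: "lie_type \<Rightarrow> (nat \<Rightarrow> rat \<Rightarrow> 'a::field) \<Rightarrow> nat \<Rightarrow> rat \<Rightarrow> 'a" where
  "sfun g \<tau> i n = Tfun g \<tau> i n / (\<tau> i n * \<tau> i (n + dd g i))"

definition p_tau :: "lie_type \<Rightarrow> (nat \<Rightarrow> rat \<Rightarrow> 'a::field) \<Rightarrow> nat \<Rightarrow> rat \<Rightarrow> 'a" where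
  "p_tau g \<tau> i n = sfun g \<tau> i n / sfun g \<tau> i (n + dd g i)"

definition phi_subst :: "lie_type \<Rightarrow> (nat \<Rightarrow> rat \<Rightarrow> 'a) \<Rightarrow> nat \<Rightarrow> rat \<Rightarrow> 'a" where
  "phi_subst g A i n = A i (n - dd g i)"

definition p_star :: "lie_type \<Rightarrow> (nat \<Rightarrow> rat \<Rightarrow> 'a::field) \<Rightarrow> nat \<Rightarrow> rat \<Rightarrow> 'a" where
  "p_star g A i n =
     (\<Prod>v\<in>{v\<in>vertices g. eps g (i, n) v \<noteq> 0}. A (fst v) (snd v) powi eps g (i, n) v)"

end

theory Submission
  imports Defs
begin

text \<open>Both sides are Laurent monomials in the variables \<open>A^j_m\<close>.  For \<open>p^*(X^i_n)\<close> the exponent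
  vector is the row \<open>\<epsilon>(v^i_n, -)\<close> of the exchange matrix.  Since
  \<open>p_\<tau>(X^i_n) = \<tau>_i(n+2d_i)/\<tau>_i(n) \<cdot> T_i(n)/T_i(n+d_i)\<close> and \<open>\<phi>\<close> sends \<open>\<tau>_j(x)\<close> to \<open>A^j_{x-d_j}\<close>,
  the exponent vector of \<open>\<phi>(p_\<tau>(X^i_n))\<close> can be read off from the Cartan matrix.  The two vectors
  vanish off the lattice \<open>d\<int>\<close>, because every \<open>d_j\<close> lies in \<open>d\<int>\<close>; on the lattice they agree by a
  direct count of the arrows between \<open>v^i_n\<close> and \<open>v^j_m\<close>, done type by type.\<close>

definition laurent_monomial :: "('v \<Rightarrow> 'a::field) \<Rightarrow> ('v \<Rightarrow> int) \<Rightarrow> 'a" where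
  "laurent_monomial A e = (\<Prod>v\<in>{v. e v \<noteq> 0}. A v powi e v)"

lemma laurent_monomial_eq_prod_superset:
  assumes "finite S" "{v. e v \<noteq> 0} \<subseteq> S"
  shows "laurent_monomial A e = (\<Prod>v\<in>S. A v powi e v)"
  unfolding laurent_monomial_def
  by (rule prod.mono_neutral_left) (use assms in auto)

lemma laurent_monomial_zero [simp]: "laurent_monomial A (\<lambda>v. 0) = 1"
  by (simp add: laurent_monomial_def)

lemma laurent_monomial_indicator [simp]: "laurent_monomial A (\<lambda>v. of_bool (v = w)) = A w"
  by (subst laurent_monomial_eq_prod_superset[of "{w}"]) auto

lemma laurent_monomial_uminus: "laurent_monomial A (\<lambda>v. - e v) = inverse (laurent_monomial A e)"
  by (simp add: laurent_monomial_def power_int_minus prod_inversef[unfolded comp_def])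

lemma laurent_monomial_add:
  assumes "\<forall>v. A v \<noteq> 0" "finite {v. e v \<noteq> 0}" "finite {v. f v \<noteq> 0}"
  shows "laurent_monomial A (\<lambda>v. e v + f v) = laurent_monomial A e * laurent_monomial A f"
proof -
  let ?S = "{v. e v \<noteq> 0} \<union> {v. f v \<noteq> 0}"
  have "finite ?S" using assms by simp
  then have "laurent_monomial A (\<lambda>v. e v + f v) = (\<Prod>v\<in>?S. A v powi e v * A v powi f v)"
    using assms(1) by (subst laurent_monomial_eq_prod_superset[of ?S]) (auto simp: power_int_add)
  also have "\<dots> = laurent_monomial A e * laurent_monomial A f"
    using \<open>finite ?S\<close>
    by (simp add: prod.distrib laurent_monomial_eq_prod_superset[of ?S])
  finally show ?thesis .
qed

lemma laurent_monomial_diff: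
  assumes "\<forall>v. A v \<noteq> 0" "finite {v. e v \<noteq> 0}" "finite {v. f v \<noteq> 0}"
  shows "laurent_monomial A (\<lambda>v. e v - f v) = laurent_monomial A e / laurent_monomial A f"
  using laurent_monomial_add[of A e "\<lambda>v. - f v"] assms
  by (simp add: laurent_monomial_uminus divide_inverse)

lemma finite_support_add:
  fixes e f :: "'v \<Rightarrow> 'b::comm_monoid_add"
  assumes "finite {v. e v \<noteq> 0}" "finite {v. f v \<noteq> 0}"
  shows "finite {v. e v + f v \<noteq> 0}"
  by (rule finite_subset[of _ "{v. e v \<noteq> 0} \<union> {v. f v \<noteq> 0}"]) (use assms in auto)

lemma finite_support_sum:
  assumes "finite K" "\<forall>k\<in>K. finite {v. e k v \<noteq> 0}"
  shows "finite {v. (\<Sum>k\<in>K. e k v) \<noteq> 0}"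
  by (rule finite_subset[of _ "\<Union>k\<in>K. {v. e k v \<noteq> 0}"])
     (use assms in \<open>auto elim: sum.not_neutral_contains_not_neutral\<close>)

lemma laurent_monomial_sum:
  assumes "\<forall>v. A v \<noteq> 0" "finite K" "\<forall>k\<in>K. finite {v. e k v \<noteq> 0}"
  shows "laurent_monomial A (\<lambda>v. \<Sum>k\<in>K. e k v) = (\<Prod>k\<in>K. laurent_monomial A (e k))"
  using assms(2,3)
proof (induction K rule: finite_induct)
  case (insert k K)
  then show ?case
    by (simp add: laurent_monomial_add[OF assms(1)] finite_support_sum)
qed simp

definition ratio_exponent :: "'v \<Rightarrow> 'v \<Rightarrow> 'v \<Rightarrow> int" where
  "ratio_exponent u w v = of_bool (v = u) - of_bool (v = w)"

lemma finite_support_ratio_exponent: "finite {v. ratio_exponent u w v \<noteq> 0}"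
  by (rule finite_subset[of _ "{u, w}"]) (auto simp: ratio_exponent_def)

lemma laurent_monomial_ratio_exponent:
  "\<forall>v. A v \<noteq> 0 \<Longrightarrow> laurent_monomial A (ratio_exponent u w) = A u / A w"
  using laurent_monomial_diff[of A "\<lambda>v. of_bool (v = u)" "\<lambda>v. of_bool (v = w)"]
  by (simp add: ratio_exponent_def[abs_def])

lemma laurent_monomial_double_sum_ratio_exponent:
  assumes "\<forall>v. A v \<noteq> 0" "finite J" "\<And>j. finite (K j)"
  shows "laurent_monomial A (\<lambda>v. \<Sum>j\<in>J. \<Sum>k\<in>K j. ratio_exponent (a j k) (b j k) v)
           = (\<Prod>j\<in>J. \<Prod>k\<in>K j. A (a j k) / A (b j k))"
  using assms
  by (simp add: laurent_monomial_sum finite_support_sum finite_support_ratio_exponent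
                laurent_monomial_ratio_exponent)

lemma finite_support_double_sum_ratio_exponent:
  assumes "finite J" "\<And>j. finite (K j)"
  shows "finite {v. (\<Sum>j\<in>J. \<Sum>k\<in>K j. ratio_exponent (a j k) (b j k) v) \<noteq> 0}"
  using assms by (simp add: finite_support_sum finite_support_ratio_exponent)

definition minus_cartan :: "lie_type \<Rightarrow> nat \<Rightarrow> nat \<Rightarrow> nat" where
  "minus_cartan g i j = nat \<lfloor>- cartan g i j\<rfloor>"

lemma Tfun_eq_shifts:
  "Tfun g \<tau> i n =
     (\<Prod>j\<in>{j\<in>Sset g. j < i}. \<Prod>k\<in>{1..minus_cartan g i j}. \<tau> j (n + of_nat k * dij g i j))
   * (\<Prod>j\<in>{j\<in>Sset g. i < j}. \<Prod>k\<in>{..<minus_cartan g i j}. \<tau> j (n + of_nat k * dij g i j))"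
proof -
  have shifts: "{k. 1 \<le> k \<and> of_nat k \<le> - cartan g i j} = {1..minus_cartan g i j}"
    "{k. of_nat k \<le> - cartan g i j - 1} = {..<minus_cartan g i j}" for j
    by (auto simp: minus_cartan_def; linarith)+
  show ?thesis unfolding Tfun_def shifts ..
qed

text \<open>The first summand comes from \<open>\<tau>_i(n+2d_i)/\<tau>_i(n)\<close>, the double sums from \<open>T_i(n)/T_i(n+d_i)\<close>.\<close>

definition phi_p_tau_exponent :: "lie_type \<Rightarrow> nat \<Rightarrow> rat \<Rightarrow> nat \<times> rat \<Rightarrow> int" where
  "phi_p_tau_exponent g i n v =
     ratio_exponent (i, n + dd g i) (i, n - dd g i) v
   + (\<Sum>j\<in>{j\<in>Sset g. j < i}. \<Sum>k\<in>{1..minus_cartan g i j}.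
        ratio_exponent (j, n + of_nat k * dij g i j - dd g j)
          (j, n + dd g i + of_nat k * dij g i j - dd g j) v)
   + (\<Sum>j\<in>{j\<in>Sset g. i < j}. \<Sum>k\<in>{..<minus_cartan g i j}.
        ratio_exponent (j, n + of_nat k * dij g i j - dd g j)
          (j, n + dd g i + of_nat k * dij g i j - dd g j) v)"

lemma p_tau_phi_eq_laurent_monomial:
  fixes A :: "nat \<Rightarrow> rat \<Rightarrow> 'a::field"
  assumes nz: "\<forall>j m. A j m \<noteq> 0"
  shows "p_tau g (phi_subst g A) i n = laurent_monomial (case_prod A) (phi_p_tau_exponent g i n)"
proof -
  define L where "L x = (\<Prod>j\<in>{j\<in>Sset g. j < i}. \<Prod>k\<in>{1..minus_cartan g i j}.
    A j (x + of_nat k * dij g i j - dd g j))" for x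
  define U where "U x = (\<Prod>j\<in>{j\<in>Sset g. i < j}. \<Prod>k\<in>{..<minus_cartan g i j}.
    A j (x + of_nat k * dij g i j - dd g j))" for x
  have nz': "\<forall>v. case_prod A v \<noteq> 0" using nz by simp
  have fin_J: "finite {j\<in>Sset g. P j}" for P by (simp add: Sset_def)
  have "L x \<noteq> 0" "U x \<noteq> 0" for x
    using nz fin_J by (simp_all add: L_def U_def)
  then have "p_tau g (phi_subst g A) i n
      = A i (n + dd g i) / A i (n - dd g i) * (L n / L (n + dd g i)) * (U n / U (n + dd g i))"
    using nz by (simp add: p_tau_def sfun_def Tfun_eq_shifts phi_subst_def L_def U_def field_simps)
  also have "\<dots> = laurent_monomial (case_prod A) (phi_p_tau_exponent g i n)"
    unfolding phi_p_tau_exponent_def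
    by (simp add: laurent_monomial_add nz' fin_J
          laurent_monomial_ratio_exponent laurent_monomial_double_sum_ratio_exponent
          finite_support_ratio_exponent finite_support_double_sum_ratio_exponent
          finite_support_add L_def U_def prod_dividef)
  finally show ?thesis .
qed

lemma p_star_eq_laurent_monomial: "p_star g A i n = laurent_monomial (case_prod A) (eps g (i, n))"
proof -
  have "{v\<in>vertices g. eps g (i, n) v \<noteq> 0} = {v. eps g (i, n) v \<noteq> 0}"
    by (auto simp: eps_def arrows_def)
  then show ?thesis by (simp add: p_star_def laurent_monomial_def case_prod_beta)
qed

definition phi_p_tau_exponent_at :: "lie_type \<Rightarrow> nat \<Rightarrow> rat \<Rightarrow> nat \<Rightarrow> rat \<Rightarrow> int" where
  "phi_p_tau_exponent_at g i n j m =
     (if j = i then ratio_exponent (n + dd g i) (n - dd g i) m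
      else if j < i then \<Sum>k\<in>{1..minus_cartan g i j}.
        ratio_exponent (n + of_nat k * dij g i j - dd g j) (n + dd g i + of_nat k * dij g i j - dd g j)
          m
      else \<Sum>k\<in>{..<minus_cartan g i j}.
        ratio_exponent (n + of_nat k * dij g i j - dd g j) (n + dd g i + of_nat k * dij g i j - dd g j)
          m)"

lemma ratio_exponent_Pair:
  "ratio_exponent (j', a) (j', b) (j, m) = (if j' = j then ratio_exponent a b m else 0)"
  by (simp add: ratio_exponent_def)

lemma phi_p_tau_exponent_apply:
  assumes "i \<in> Sset g"
  shows "phi_p_tau_exponent g i n (j, m)
           = (if j \<in> Sset g then phi_p_tau_exponent_at g i n j m else 0)"
proof -
  have collapse: "(\<Sum>j'\<in>J. \<Sum>k\<in>K j'. if j' = j then f j' k else 0)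
      = (if j \<in> J then sum (f j) (K j) else 0)"
    if "finite J" for J and K :: "nat \<Rightarrow> nat set" and f :: "nat \<Rightarrow> nat \<Rightarrow> int"
  proof -
    have "(\<Sum>j'\<in>J. \<Sum>k\<in>K j'. if j' = j then f j' k else 0)
        = (\<Sum>j'\<in>J. if j' = j then sum (f j') (K j') else 0)"
      by (intro sum.cong) auto
    then show ?thesis using that by (simp add: sum.delta)
  qed
  show ?thesis
    using assms by (simp add: phi_p_tau_exponent_def phi_p_tau_exponent_at_def ratio_exponent_Pair
        collapse Sset_def)
qed

lemma dZ_add:
  assumes "x \<in> dZ g" "y \<in> dZ g" shows "x + y \<in> dZ g"
proof -
  obtain a b where "x = of_int a * dmin g" "y = of_int b * dmin g" using assms by (auto simp: dZ_def)
  then have "x + y = of_int (a + b) * dmin g" by (simp add: distrib_right)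
  then show ?thesis unfolding dZ_def by blast
qed

lemma dZ_diff:
  assumes "x \<in> dZ g" "y \<in> dZ g" shows "x - y \<in> dZ g"
proof -
  obtain a b where "x = of_int a * dmin g" "y = of_int b * dmin g" using assms by (auto simp: dZ_def)
  then have "x - y = of_int (a - b) * dmin g" by (simp add: left_diff_distrib)
  then show ?thesis unfolding dZ_def by blast
qed

lemma of_nat_mult_dZ:
  assumes "x \<in> dZ g" shows "of_nat k * x \<in> dZ g"
proof -
  obtain a where "x = of_int a * dmin g" using assms by (auto simp: dZ_def)
  then have "of_nat k * x = of_int (int k * a) * dmin g" by simp
  then show ?thesis unfolding dZ_def by blast
qed

lemma phi_p_tau_exponent_at_outside_dZ:
  assumes dd: "\<forall>j\<in>Sset g. dd g j \<in> dZ g" and "i \<in> Sset g" "j \<in> Sset g"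
    and n: "n \<in> dZ g" and m: "m \<notin> dZ g"
  shows "phi_p_tau_exponent_at g i n j m = 0"
proof -
  have di: "dd g i \<in> dZ g" and dj: "dd g j \<in> dZ g" using dd assms by auto
  then have "dij g i j \<in> dZ g" by (simp add: dij_def min_def)
  then have "m \<noteq> n + of_nat k * dij g i j - dd g j"
    "m \<noteq> n + dd g i + of_nat k * dij g i j - dd g j" for k
    using m n di dj by (metis dZ_add dZ_diff of_nat_mult_dZ)+
  moreover have "m \<noteq> n + dd g i" "m \<noteq> n - dd g i"
    using m n di by (metis dZ_add dZ_diff)+
  ultimately show ?thesis by (simp add: phi_p_tau_exponent_at_def ratio_exponent_def)
qed

lemma eps_eq_phi_p_tau_exponent:
  assumes dd: "\<forall>j\<in>Sset g. dd g j \<in> dZ g"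
    and arrows: "\<And>j m. j \<in> Sset g \<Longrightarrow>
        int (arrows_raw g i n j m) - int (arrows_raw g j m i n) = phi_p_tau_exponent_at g i n j m"
    and i: "i \<in> Sset g" and n: "n \<in> dZ g"
  shows "eps g (i, n) = phi_p_tau_exponent g i n"
proof
  fix v :: "nat \<times> rat"
  obtain j m where v: "v = (j, m)" by fastforce
  show "eps g (i, n) v = phi_p_tau_exponent g i n v"
    using arrows phi_p_tau_exponent_at_outside_dZ[OF dd i _ n]
    by (simp add: v phi_p_tau_exponent_apply[OF i] eps_def arrows_def vertices_def i n)
qed

lemmas phi_p_tau_exponent_at_eval = phi_p_tau_exponent_at_def ratio_exponent_def minus_cartan_def
  cartan_def root_ip_def dij_def atLeastAtMost_upt lessThan_atLeast0 atLeastLessThan_upt upt_rec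

lemma dynkin_adj_commute: "dynkin_adj g a b = dynkin_adj g b a"
  by (cases g) (simp_all add: min.commute max.commute)

lemma arrows_raw_skew_simply_laced:
  assumes arrows: "\<And>a p b q. arrows_raw g a p b q = of_bool (b = a \<and> q = p + 1)
        + of_bool (dynkin_adj g a b \<and> b < a \<and> q = p)
        + of_bool (dynkin_adj g a b \<and> a < b \<and> p = q + 1)"
    and dd: "\<And>j. dd g j = 1" and irrefl: "\<And>a. \<not> dynkin_adj g a a"
  shows "int (arrows_raw g i n j m) - int (arrows_raw g j m i n) = phi_p_tau_exponent_at g i n j m"
  using dynkin_adj_commute[of g i j]
  by (auto simp: arrows dd irrefl phi_p_tau_exponent_at_def ratio_exponent_def minus_cartan_def
      cartan_def root_ip_def dij_def)

lemma arrows_raw_skew_TB_TC: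
  assumes g: "g \<in> {TB l, TC l}" and l: "2 \<le> l"
    and i: "1 \<le> i" "i \<le> l" and j: "1 \<le> j" "j \<le> l"
  shows "int (arrows_raw g i n j m) - int (arrows_raw g j m i n) = phi_p_tau_exponent_at g i n j m"
proof -
  have "i = j \<or> j = i + 1 \<and> j = l \<or> j = i + 1 \<and> j < l \<or> i = j + 1 \<and> i = l
      \<or> i = j + 1 \<and> i < l \<or> j + 2 \<le> i \<or> i + 2 \<le> j"
    using i j by linarith
  with g show ?thesis
    by (elim insertE emptyE disjE conjE;
        use l i j in \<open>auto simp: phi_p_tau_exponent_at_eval of_bool_def\<close>)
qed

lemma arrows_raw_skew_TF4:
  assumes "i \<in> {1..4}" "j \<in> {1..4}"
  shows "int (arrows_raw TF4 i n j m) - int (arrows_raw TF4 j m i n)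
           = phi_p_tau_exponent_at TF4 i n j m"
proof -
  have "i \<in> {1,2,3,4}" "j \<in> {1,2,3,4}" using assms by auto
  then show ?thesis
    by (elim insertE emptyE) (simp_all add: phi_p_tau_exponent_at_eval)
qed

lemma arrows_raw_skew_TG2:
  assumes "i \<in> {1..2}" "j \<in> {1..2}"
  shows "int (arrows_raw TG2 i n j m) - int (arrows_raw TG2 j m i n)
           = phi_p_tau_exponent_at TG2 i n j m"
proof -
  have "i \<in> {1,2}" "j \<in> {1,2}" using assms by auto
  then show ?thesis
    by (elim insertE emptyE) (simp_all add: phi_p_tau_exponent_at_eval)
qed

lemma arrows_raw_skew_eq_phi_p_tau_exponent_at:
  assumes "valid_type g" "i \<in> Sset g" "j \<in> Sset g"
  shows "int (arrows_raw g i n j m) - int (arrows_raw g j m i n) = phi_p_tau_exponent_at g i n j m"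
proof (cases g)
  case (TA l)
  show ?thesis unfolding TA by (rule arrows_raw_skew_simply_laced) simp_all
next
  case (TD l)
  show ?thesis unfolding TD
    by (rule arrows_raw_skew_simply_laced) (use assms TD in \<open>auto simp: Let_def\<close>)
next
  case (TE l)
  show ?thesis unfolding TE by (rule arrows_raw_skew_simply_laced) (simp_all add: Let_def)
next
  case (TB l)
  show ?thesis by (rule arrows_raw_skew_TB_TC[of g l]) (use assms TB in \<open>auto simp: Sset_def\<close>)
next
  case (TC l)
  show ?thesis by (rule arrows_raw_skew_TB_TC[of g l]) (use assms TC in \<open>auto simp: Sset_def\<close>)
next
  case TF4
  show ?thesis unfolding TF4
    by (rule arrows_raw_skew_TF4) (use assms TF4 in \<open>auto simp: Sset_def\<close>)
next
  case TG2
  show ?thesis unfolding TG2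
    by (rule arrows_raw_skew_TG2) (use assms TG2 in \<open>auto simp: Sset_def\<close>)
qed

lemma dmin_eqI:
  assumes "j0 \<in> Sset g" "\<And>j. j \<in> Sset g \<Longrightarrow> dd g j0 \<le> dd g j"
  shows "dmin g = dd g j0"
  unfolding dmin_def using assms by (intro Min_eqI) (auto simp: Sset_def)

lemma mem_dZ_if_div_dmin_Ints:
  assumes "x / dmin g \<in> \<int>" "dmin g \<noteq> 0"
  shows "x \<in> dZ g"
proof -
  obtain c where "x / dmin g = of_int c" using assms(1) by (auto elim: Ints_cases)
  then have "x = of_int c * dmin g" using assms(2) by (simp add: field_simps)
  then show ?thesis unfolding dZ_def by blast
qed

lemma dd_in_dZ:
  assumes "valid_type g" "j \<in> Sset g"
  shows "dd g j \<in> dZ g"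
proof -
  define j0 where "j0 = (case g of TB l \<Rightarrow> l | TF4 \<Rightarrow> 4 | _ \<Rightarrow> 1)"
  have "j0 \<in> Sset g"
    "\<forall>j\<in>Sset g. dd g j0 \<le> dd g j \<and> dd g j / dd g j0 \<in> \<int> \<and> dd g j0 \<noteq> 0"
    using assms(1) by (cases g; auto simp: j0_def Sset_def)+
  then show ?thesis
    using assms(2) by (auto intro!: mem_dZ_if_div_dmin_Ints simp: dmin_eqI[of j0])
qed

theorem proposition5p5:
  fixes g :: lie_type
  assumes "valid_type g"
  shows "\<forall>A :: nat \<Rightarrow> rat \<Rightarrow> complex. (\<forall>j m. A j m \<noteq> 0) \<longrightarrow>
           (\<forall>i \<in> Sset g. \<forall>n \<in> dZ g. p_tau g (phi_subst g A) i n = p_star g A i n)"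
proof (intro allI impI ballI)
  fix A :: "nat \<Rightarrow> rat \<Rightarrow> complex" and i n
  assume nz: "\<forall>j m. A j m \<noteq> 0" and i: "i \<in> Sset g" and n: "n \<in> dZ g"
  have "eps g (i, n) = phi_p_tau_exponent g i n"
    using dd_in_dZ[OF assms] arrows_raw_skew_eq_phi_p_tau_exponent_at[OF assms i] i n
    by (intro eps_eq_phi_p_tau_exponent) auto
  then show "p_tau g (phi_subst g A) i n = p_star g A i n"
    by (simp add: p_tau_phi_eq_laurent_monomial[OF nz] p_star_eq_laurent_monomial)
qed

end
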